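(* Let $n\ge 2$ and $1\le p\le n-1$. Let $a_{n,p}$ be the number of $\alpha\in\mathcal{OCT}_n$ with $F(\alpha)=\{1\}$ and $h(\alpha)=p$. Then $a_{n,p}$ also equals the number of $\alpha\in\mathcal{OCT}_n$ with $F(\alpha)=\{n\}$ and $h(\alpha)=p$, and $a_{n,p}=\binom{n-2}{p-1}$.
   Context: $X_n=\{1,2,\dots,n\}$ with its usual order; maps are written on the right ($x\alpha$). A map $\alpha:X_n\to X_n$ is order-preserving if $x\le y$ implies $x\alpha\le y\alpha$, and a contraction if $|x\alpha-y\alpha|\le|x-y|$ for all $x,y$. $\mathcal{OCT}_n$ is the set of all order-preserving contractions $X_n\to X_n$ (defined on all of $X_n$). For such $\alpha$: the height is $h(\alpha)=|\mathrm{Im}\,\alpha|$, and $F(\alpha)=\{x\in X_n:x\alpha=x\}$ is the set of fixed points. *)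

theory Defs
  imports Main "HOL-Library.FuncSet"
begin

text \<open>Full transformations of X_n = {1..n} are represented as extensional functions
  in PiE {1..n} (%_. {1..n}) (value undefined outside X_n), so that the set is finite.\<close>

definition OCT :: "nat \<Rightarrow> (nat \<Rightarrow> nat) set" where
  "OCT n = {\<alpha> \<in> {1..n} \<rightarrow>\<^sub>E {1..n}.
      (\<forall>x\<in>{1..n}. \<forall>y\<in>{1..n}. x \<le> y \<longrightarrow> \<alpha> x \<le> \<alpha> y) \<and>
      (\<forall>x\<in>{1..n}. \<forall>y\<in>{1..n}. \<bar>int (\<alpha> x) - int (\<alpha> y)\<bar> \<le> \<bar>int x - int y\<bar>)}"

definition height :: "nat \<Rightarrow> (nat \<Rightarrow> nat) \<Rightarrow> nat" where
  "height n \<alpha> = card (\<alpha> ` {1..n})"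

definition fixset :: "nat \<Rightarrow> (nat \<Rightarrow> nat) \<Rightarrow> nat set" where
  "fixset n \<alpha> = {x \<in> {1..n}. \<alpha> x = x}"

end

theory Submission
  imports Defs
begin

text \<open>An order-preserving contraction of \<open>{1..n}\<close> is exactly a map whose consecutive values
  differ by 0 or 1, so its image is the interval \<open>{\<alpha> 1..\<alpha> n}\<close>. If \<open>F(\<alpha>) = {1}\<close>, then
  \<open>\<alpha> 1 = \<alpha> 2 = 1\<close> (and conversely this forces \<open>\<alpha> x < x\<close> for \<open>x \<ge> 2\<close>), so \<alpha> is determined by the
  set of positions in \<open>{3..n}\<close> where it steps up, and its height is one more than the size of
  that set: hence \<open>(n-2) choose (p-1)\<close> maps of height p. Conjugating by the order reversal
  \<open>x \<mapsto> n + 1 - x\<close> is an involution of \<open>OCT n\<close> preserving heights and exchanging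
  \<open>F(\<alpha>) = {1}\<close> with \<open>F(\<alpha>) = {n}\<close>.\<close>

definition unit_steps :: "nat \<Rightarrow> (nat \<Rightarrow> nat) \<Rightarrow> bool" where
  "unit_steps n \<alpha> \<longleftrightarrow> (\<forall>x\<in>{1..<n}. \<alpha> (Suc x) = \<alpha> x \<or> \<alpha> (Suc x) = Suc (\<alpha> x))"

lemma unit_stepsD:
  "unit_steps n \<alpha> \<Longrightarrow> 1 \<le> x \<Longrightarrow> x < n \<Longrightarrow> \<alpha> (Suc x) = \<alpha> x \<or> \<alpha> (Suc x) = Suc (\<alpha> x)"
  by (simp add: unit_steps_def)

lemma unit_steps_bounds:
  assumes "unit_steps n \<alpha>" "1 \<le> x" "x \<le> y" "y \<le> n"
  shows "\<alpha> x \<le> \<alpha> y \<and> \<alpha> y \<le> \<alpha> x + (y - x)"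
  using assms(3,4)
proof (induction y rule: dec_induct)
  case (step k)
  with assms(2) have "\<alpha> (Suc k) = \<alpha> k \<or> \<alpha> (Suc k) = Suc (\<alpha> k)"
    by (intro unit_stepsD[OF assms(1)]) auto
  with step show ?case by auto
qed simp

lemma unit_steps_image:
  assumes "unit_steps n \<alpha>" "1 \<le> m" "m \<le> n"
  shows "\<alpha> ` {1..m} = {\<alpha> 1..\<alpha> m}"
  using assms(2,3)
proof (induction m rule: dec_induct)
  case (step k)
  then have "\<alpha> (Suc k) = \<alpha> k \<or> \<alpha> (Suc k) = Suc (\<alpha> k)"
    by (intro unit_stepsD[OF assms(1)]) auto
  moreover have "\<alpha> 1 \<le> \<alpha> k"
    using unit_steps_bounds[OF assms(1), of 1 k] step by auto
  moreover have "{1..Suc k} = insert (Suc k) {1..k}" by auto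
  ultimately show ?case using step by auto
qed simp

lemma height_unit_steps:
  assumes "unit_steps n \<alpha>" "1 \<le> n"
  shows "height n \<alpha> = Suc (\<alpha> n) - \<alpha> 1"
  using unit_steps_image[OF assms(1,2) order_refl] by (simp add: height_def)

lemma OCT_iff_unit_steps:
  assumes "1 \<le> n"
  shows "\<alpha> \<in> OCT n \<longleftrightarrow> \<alpha> \<in> extensional {1..n} \<and> unit_steps n \<alpha> \<and> 1 \<le> \<alpha> 1 \<and> \<alpha> n \<le> n"
proof
  assume \<alpha>: "\<alpha> \<in> OCT n"
  have "unit_steps n \<alpha>"
    unfolding unit_steps_def
  proof
    fix x assume "x \<in> {1..<n}"
    then have x: "x \<in> {1..n}" "Suc x \<in> {1..n}" by auto
    have "\<alpha> x \<le> \<alpha> (Suc x)" using \<alpha> x by (simp add: OCT_def)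
    moreover have "\<bar>int (\<alpha> (Suc x)) - int (\<alpha> x)\<bar> \<le> \<bar>int (Suc x) - int x\<bar>"
      using \<alpha> x unfolding OCT_def by blast
    ultimately show "\<alpha> (Suc x) = \<alpha> x \<or> \<alpha> (Suc x) = Suc (\<alpha> x)" by auto
  qed
  with \<alpha> assms show "\<alpha> \<in> extensional {1..n} \<and> unit_steps n \<alpha> \<and> 1 \<le> \<alpha> 1 \<and> \<alpha> n \<le> n"
    unfolding OCT_def by (auto simp: PiE_iff)
next
  assume "\<alpha> \<in> extensional {1..n} \<and> unit_steps n \<alpha> \<and> 1 \<le> \<alpha> 1 \<and> \<alpha> n \<le> n"
  then have ext: "\<alpha> \<in> extensional {1..n}" and steps: "unit_steps n \<alpha>"
    and ends: "1 \<le> \<alpha> 1" "\<alpha> n \<le> n" by auto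
  have bounds: "\<alpha> x \<le> \<alpha> y \<and> \<alpha> y \<le> \<alpha> x + (y - x)" if "x \<in> {1..n}" "y \<in> {1..n}" "x \<le> y" for x y
    using unit_steps_bounds[OF steps, of x y] that by auto
  have "\<alpha> x \<in> {1..n}" if "x \<in> {1..n}" for x
    using bounds[of 1 x] bounds[of x n] that ends assms by auto
  moreover have "\<bar>int (\<alpha> x) - int (\<alpha> y)\<bar> \<le> \<bar>int x - int y\<bar>" if "x \<in> {1..n}" "y \<in> {1..n}" for x y
    using bounds[of x y] bounds[of y x] that by (cases "x \<le> y") auto
  ultimately show "\<alpha> \<in> OCT n"
    using ext bounds unfolding OCT_def by (auto simp: PiE_iff)
qed

definition ascents :: "nat \<Rightarrow> (nat \<Rightarrow> nat) \<Rightarrow> nat set" where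
  "ascents n \<alpha> = {x \<in> {2..n}. \<alpha> x = Suc (\<alpha> (x - 1))}"

lemma unit_steps_eq_card_ascents:
  assumes "unit_steps n \<alpha>" "1 \<le> x" "x \<le> n"
  shows "\<alpha> x = \<alpha> 1 + card {y \<in> ascents n \<alpha>. y \<le> x}"
  using assms(2,3)
proof (induction x rule: dec_induct)
  case base
  have "{y \<in> ascents n \<alpha>. y \<le> 1} = {}" by (auto simp: ascents_def)
  then show ?case by simp
next
  case (step k)
  let ?A = "\<lambda>x. {y \<in> ascents n \<alpha>. y \<le> x}"
  have "?A (Suc k) = (if \<alpha> (Suc k) = Suc (\<alpha> k) then insert (Suc k) (?A k) else ?A k)"
    using step by (auto simp: ascents_def le_Suc_eq)
  moreover have "Suc k \<notin> ?A k" "finite (?A k)" by auto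
  moreover have "\<alpha> (Suc k) = \<alpha> k \<or> \<alpha> (Suc k) = Suc (\<alpha> k)"
    using step by (intro unit_stepsD[OF assms(1)]) auto
  moreover have "\<alpha> k = \<alpha> 1 + card (?A k)" using step by simp
  ultimately show ?case by auto
qed

lemma bij_betw_ascents:
  assumes "1 \<le> n"
  shows "bij_betw (ascents n) {\<alpha> \<in> extensional {1..n}. unit_steps n \<alpha> \<and> \<alpha> 1 = 1} (Pow {2..n})"
proof (rule bij_betw_byWitness)
  let ?from_set = "\<lambda>S. \<lambda>x\<in>{1..n}. Suc (card {y \<in> S. y \<le> x})"
  show "\<forall>\<alpha>\<in>{\<alpha> \<in> extensional {1..n}. unit_steps n \<alpha> \<and> \<alpha> 1 = 1}. ?from_set (ascents n \<alpha>) = \<alpha>"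
  proof
    fix \<alpha> assume \<alpha>: "\<alpha> \<in> {\<alpha> \<in> extensional {1..n}. unit_steps n \<alpha> \<and> \<alpha> 1 = 1}"
    show "?from_set (ascents n \<alpha>) = \<alpha>"
    proof
      fix x
      show "?from_set (ascents n \<alpha>) x = \<alpha> x"
        using \<alpha> unit_steps_eq_card_ascents[of n \<alpha> x] by (cases "x \<in> {1..n}") (auto simp: extensional_def)
    qed
  qed
  have from_set_step: "?from_set S (Suc x) = ?from_set S x + (if Suc x \<in> S then 1 else 0)"
    if "x \<in> {1..<n}" for S x
  proof -
    have "{y \<in> S. y \<le> Suc x} = (if Suc x \<in> S then insert (Suc x) {y \<in> S. y \<le> x} else {y \<in> S. y \<le> x})"
      by (auto simp: le_Suc_eq)
    then show ?thesis using that by auto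
  qed
  show "\<forall>S\<in>Pow {2..n}. ascents n (?from_set S) = S"
  proof
    fix S assume S: "S \<in> Pow {2..n}"
    have "x \<in> ascents n (?from_set S) \<longleftrightarrow> x \<in> S" for x
    proof (cases "x \<in> {2..n}")
      case True
      then have "x - 1 \<in> {1..<n}" "Suc (x - 1) = x" by auto
      with from_set_step[of "x - 1" S] True show ?thesis by (auto simp: ascents_def)
    qed (use S ascents_def in auto)
    then show "ascents n (?from_set S) = S" by blast
  qed
  show "ascents n ` {\<alpha> \<in> extensional {1..n}. unit_steps n \<alpha> \<and> \<alpha> 1 = 1} \<subseteq> Pow {2..n}"
    by (auto simp: ascents_def)
  show "?from_set ` Pow {2..n} \<subseteq> {\<alpha> \<in> extensional {1..n}. unit_steps n \<alpha> \<and> \<alpha> 1 = 1}"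
  proof
    fix \<alpha> assume "\<alpha> \<in> ?from_set ` Pow {2..n}"
    then obtain S where S: "S \<subseteq> {2..n}" and \<alpha>: "\<alpha> = ?from_set S" by auto
    have "unit_steps n \<alpha>"
      unfolding unit_steps_def \<alpha> using from_set_step by simp
    moreover have "{y \<in> S. y \<le> 1} = {}" using S by auto
    ultimately show "\<alpha> \<in> {\<alpha> \<in> extensional {1..n}. unit_steps n \<alpha> \<and> \<alpha> 1 = 1}"
      using assms \<alpha> by simp
  qed
qed

lemma OCT_fixset_eq_1_iff:
  assumes "2 \<le> n" "\<alpha> \<in> OCT n"
  shows "fixset n \<alpha> = {1} \<longleftrightarrow> \<alpha> 1 = 1 \<and> \<alpha> 2 = 1"
proof -
  have steps: "unit_steps n \<alpha>" using assms OCT_iff_unit_steps by simp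
  have two: "\<alpha> 2 = \<alpha> 1 \<or> \<alpha> 2 = Suc (\<alpha> 1)"
    using unit_stepsD[OF steps, of 1] assms(1) by (simp add: numeral_2_eq_2)
  have others: "\<alpha> x \<noteq> x" if "\<alpha> 2 = 1" "x \<in> {1..n}" "x \<noteq> 1" for x
    using unit_steps_bounds[OF steps, of 2 x] that by auto
  show ?thesis
  proof
    assume "fixset n \<alpha> = {1}"
    then have "1 \<in> fixset n \<alpha>" "2 \<notin> fixset n \<alpha>" by auto
    then have "\<alpha> 1 = 1" "\<alpha> 2 \<noteq> 2" using assms(1) by (auto simp: fixset_def)
    with two show "\<alpha> 1 = 1 \<and> \<alpha> 2 = 1" by auto
  next
    assume "\<alpha> 1 = 1 \<and> \<alpha> 2 = 1"
    with others assms(1) show "fixset n \<alpha> = {1}" by (auto simp: fixset_def)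
  qed
qed

lemma card_OCT_fixset_1:
  assumes "2 \<le> n" "1 \<le> p"
  shows "card {\<alpha> \<in> OCT n. fixset n \<alpha> = {1} \<and> height n \<alpha> = p} = (n - 2) choose (p - 1)"
proof -
  let ?U = "{\<alpha> \<in> extensional {1..n}. unit_steps n \<alpha> \<and> \<alpha> 1 = 1}"
  have set_eq: "{\<alpha> \<in> OCT n. fixset n \<alpha> = {1} \<and> height n \<alpha> = p} = {\<alpha> \<in> ?U. \<alpha> 2 = 1 \<and> height n \<alpha> = p}"
  proof -
    have "\<alpha> n \<le> n" if "unit_steps n \<alpha>" "\<alpha> 1 = 1" for \<alpha>
      using unit_steps_bounds[OF that(1), of 1 n] that(2) assms(1) by simp
    then have "\<alpha> \<in> OCT n \<and> fixset n \<alpha> = {1} \<longleftrightarrow> \<alpha> \<in> ?U \<and> \<alpha> 2 = 1" for \<alpha>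
      using assms(1) OCT_iff_unit_steps[of n \<alpha>] OCT_fixset_eq_1_iff[OF assms(1), of \<alpha>] by auto
    then show ?thesis by blast
  qed
  have bij: "bij_betw (ascents n) {\<alpha> \<in> ?U. \<alpha> 2 = 1 \<and> height n \<alpha> = p}
      {S \<in> Pow {2..n}. 2 \<notin> S \<and> card S = p - 1}"
  proof (rule bij_betw_Collect[OF bij_betw_ascents])
    fix \<alpha> assume "\<alpha> \<in> ?U"
    then have steps: "unit_steps n \<alpha>" and "\<alpha> 1 = 1" by auto
    then have "2 \<in> ascents n \<alpha> \<longleftrightarrow> \<alpha> 2 \<noteq> 1"
      using unit_stepsD[OF steps, of 1] assms(1) by (auto simp: ascents_def numeral_2_eq_2)
    moreover have "{y \<in> ascents n \<alpha>. y \<le> n} = ascents n \<alpha>" by (auto simp: ascents_def)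
    then have "height n \<alpha> = Suc (card (ascents n \<alpha>))"
      using height_unit_steps[OF steps] unit_steps_eq_card_ascents[OF steps, of n] \<open>\<alpha> 1 = 1\<close> assms(1)
      by simp
    ultimately show "(2 \<notin> ascents n \<alpha> \<and> card (ascents n \<alpha>) = p - 1) \<longleftrightarrow> (\<alpha> 2 = 1 \<and> height n \<alpha> = p)"
      using assms(2) by auto
  qed (use assms(1) in simp)
  have subsets_eq: "{S \<in> Pow {2..n}. 2 \<notin> S \<and> card S = p - 1} = {S. S \<subseteq> {3..n} \<and> card S = p - 1}"
  proof -
    have "{3..n} = {2..n} - {2::nat}" by auto
    then show ?thesis by blast
  qed
  have "card {\<alpha> \<in> OCT n. fixset n \<alpha> = {1} \<and> height n \<alpha> = p} = card {S. S \<subseteq> {3..n} \<and> card S = p - 1}"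
    using bij_betw_same_card[OF bij] set_eq subsets_eq by simp
  also have "\<dots> = (n - 2) choose (p - 1)" by (simp add: n_subsets)
  finally show ?thesis .
qed

lemma bij_betw_reverse: "bij_betw (\<lambda>x. Suc n - x) {1..n} {1..n}"
  by (rule bij_betw_byWitness[where f' = "\<lambda>x. Suc n - x"]) auto

definition reflect :: "nat \<Rightarrow> (nat \<Rightarrow> nat) \<Rightarrow> nat \<Rightarrow> nat" where
  "reflect n \<alpha> = (\<lambda>x\<in>{1..n}. Suc n - \<alpha> (Suc n - x))"

lemma reflect_reflect:
  assumes "\<alpha> \<in> {1..n} \<rightarrow>\<^sub>E {1..n}"
  shows "reflect n (reflect n \<alpha>) = \<alpha>"
proof
  fix x
  show "reflect n (reflect n \<alpha>) x = \<alpha> x"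
  proof (cases "x \<in> {1..n}")
    case True
    then have "Suc n - x \<in> {1..n}" "Suc n - (Suc n - x) = x" "\<alpha> x \<in> {1..n}"
      using assms by auto
    with True show ?thesis by (simp add: reflect_def)
  qed (use assms in \<open>auto simp: reflect_def\<close>)
qed

lemma reflect_OCT:
  assumes "\<alpha> \<in> OCT n"
  shows "reflect n \<alpha> \<in> OCT n"
proof -
  have range: "\<alpha> \<in> {1..n} \<rightarrow>\<^sub>E {1..n}"
    and mono: "\<forall>x\<in>{1..n}. \<forall>y\<in>{1..n}. x \<le> y \<longrightarrow> \<alpha> x \<le> \<alpha> y"
    and contr: "\<forall>x\<in>{1..n}. \<forall>y\<in>{1..n}. \<bar>int (\<alpha> x) - int (\<alpha> y)\<bar> \<le> \<bar>int x - int y\<bar>"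
    using assms by (simp_all add: OCT_def)
  have range_reflected: "\<alpha> (Suc n - x) \<in> {1..n}" if "x \<in> {1..n}" for x
    using that by (intro PiE_mem[OF range]) auto
  have int_reflect: "int (reflect n \<alpha> x) = int (Suc n) - int (\<alpha> (Suc n - x))" if "x \<in> {1..n}" for x
    using that range_reflected[OF that] by (simp add: reflect_def of_nat_diff)
  have "reflect n \<alpha> \<in> {1..n} \<rightarrow>\<^sub>E {1..n}"
    unfolding reflect_def restrict_PiE_iff
  proof
    fix x assume "x \<in> {1..n}"
    with range_reflected[of x] show "Suc n - \<alpha> (Suc n - x) \<in> {1..n}" by auto
  qed
  moreover have "reflect n \<alpha> x \<le> reflect n \<alpha> y" if "x \<in> {1..n}" "y \<in> {1..n}" "x \<le> y" for x y
  proof -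
    have "Suc n - y \<in> {1..n}" "Suc n - x \<in> {1..n}" "Suc n - y \<le> Suc n - x" using that by auto
    then have "\<alpha> (Suc n - y) \<le> \<alpha> (Suc n - x)" using mono by blast
    then have "int (reflect n \<alpha> x) \<le> int (reflect n \<alpha> y)" using int_reflect that by simp
    then show ?thesis by simp
  qed
  moreover have "\<bar>int (reflect n \<alpha> x) - int (reflect n \<alpha> y)\<bar> \<le> \<bar>int x - int y\<bar>"
    if "x \<in> {1..n}" "y \<in> {1..n}" for x y
  proof -
    have "Suc n - x \<in> {1..n}" "Suc n - y \<in> {1..n}" using that by auto
    then have "\<bar>int (\<alpha> (Suc n - x)) - int (\<alpha> (Suc n - y))\<bar> \<le> \<bar>int (Suc n - x) - int (Suc n - y)\<bar>"
      using contr by blast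
    with that show ?thesis by (simp add: int_reflect of_nat_diff abs_minus_commute)
  qed
  ultimately show ?thesis by (simp add: OCT_def)
qed

lemma bij_betw_reflect_OCT: "bij_betw (reflect n) (OCT n) (OCT n)"
proof (rule bij_betw_byWitness[where f' = "reflect n"])
  have "OCT n \<subseteq> {1..n} \<rightarrow>\<^sub>E {1..n}" by (auto simp: OCT_def)
  then show "\<forall>\<alpha>\<in>OCT n. reflect n (reflect n \<alpha>) = \<alpha>" "\<forall>\<alpha>\<in>OCT n. reflect n (reflect n \<alpha>) = \<alpha>"
    using reflect_reflect by blast+
qed (use reflect_OCT in blast)+

lemma fixset_reflect:
  assumes "\<alpha> \<in> {1..n} \<rightarrow>\<^sub>E {1..n}"
  shows "fixset n (reflect n \<alpha>) = (\<lambda>x. Suc n - x) ` fixset n \<alpha>"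
proof -
  have "x \<in> fixset n (reflect n \<alpha>) \<longleftrightarrow> x \<in> {1..n} \<and> Suc n - x \<in> fixset n \<alpha>" for x
  proof (cases "x \<in> {1..n}")
    case True
    then have "\<alpha> (Suc n - x) \<in> {1..n}" by (intro PiE_mem[OF assms]) auto
    with True show ?thesis by (auto simp: fixset_def reflect_def)
  qed (auto simp: fixset_def)
  moreover have "x \<in> (\<lambda>x. Suc n - x) ` fixset n \<alpha> \<longleftrightarrow> x \<in> {1..n} \<and> Suc n - x \<in> fixset n \<alpha>" for x
    by (auto simp: fixset_def intro: rev_image_eqI[of "Suc n - x"])
  ultimately show ?thesis by blast
qed

lemma height_reflect:
  assumes "\<alpha> \<in> {1..n} \<rightarrow>\<^sub>E {1..n}"
  shows "height n (reflect n \<alpha>) = height n \<alpha>"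
proof -
  let ?rev = "\<lambda>x. Suc n - x"
  have "reflect n \<alpha> ` {1..n} = ?rev ` \<alpha> ` ?rev ` {1..n}"
    by (auto simp: reflect_def)
  also have "\<dots> = ?rev ` \<alpha> ` {1..n}"
    using bij_betw_imp_surj_on[OF bij_betw_reverse] by simp
  finally have "reflect n \<alpha> ` {1..n} = ?rev ` \<alpha> ` {1..n}" .
  moreover have "inj_on ?rev (\<alpha> ` {1..n})"
  proof (rule inj_on_subset[OF bij_betw_imp_inj_on[OF bij_betw_reverse]])
    show "\<alpha> ` {1..n} \<subseteq> {1..n}" using PiE_mem[OF assms] by auto
  qed
  ultimately show ?thesis by (simp add: height_def card_image)
qed

lemma card_OCT_fixset_1_eq_n:
  assumes "1 \<le> n"
  shows "card {\<alpha> \<in> OCT n. fixset n \<alpha> = {1} \<and> height n \<alpha> = p}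
       = card {\<alpha> \<in> OCT n. fixset n \<alpha> = {n} \<and> height n \<alpha> = p}"
proof -
  have "bij_betw (reflect n) {\<alpha> \<in> OCT n. fixset n \<alpha> = {1} \<and> height n \<alpha> = p}
      {\<alpha> \<in> OCT n. fixset n \<alpha> = {n} \<and> height n \<alpha> = p}"
  proof (rule bij_betw_Collect[OF bij_betw_reflect_OCT])
    fix \<alpha> assume "\<alpha> \<in> OCT n"
    then have range: "\<alpha> \<in> {1..n} \<rightarrow>\<^sub>E {1..n}" by (simp add: OCT_def)
    have "fixset n \<alpha> \<subseteq> {1..n}" "{1} \<subseteq> {1..n}" using assms by (auto simp: fixset_def)
    then have "(\<lambda>x. Suc n - x) ` fixset n \<alpha> = (\<lambda>x. Suc n - x) ` {1} \<longleftrightarrow> fixset n \<alpha> = {1}"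
      using inj_on_image_eq_iff[OF bij_betw_imp_inj_on[OF bij_betw_reverse]] by blast
    then have "fixset n (reflect n \<alpha>) = {n} \<longleftrightarrow> fixset n \<alpha> = {1}"
      by (simp add: fixset_reflect[OF range])
    then show "(fixset n (reflect n \<alpha>) = {n} \<and> height n (reflect n \<alpha>) = p)
        \<longleftrightarrow> (fixset n \<alpha> = {1} \<and> height n \<alpha> = p)"
      using height_reflect[OF range] by simp
  qed
  then show ?thesis by (rule bij_betw_same_card)
qed

theorem lemma2p2:
  fixes n p :: nat
  assumes "n \<ge> 2" and "1 \<le> p" and "p \<le> n - 1"
  shows "card {\<alpha> \<in> OCT n. fixset n \<alpha> = {1} \<and> height n \<alpha> = p}
           = card {\<alpha> \<in> OCT n. fixset n \<alpha> = {n} \<and> height n \<alpha> = p}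
       \<and> card {\<alpha> \<in> OCT n. fixset n \<alpha> = {1} \<and> height n \<alpha> = p} = (n - 2) choose (p - 1)"
  using card_OCT_fixset_1_eq_n card_OCT_fixset_1 assms by simp

end
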